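(* Let $m,k$ be positive integers and suppose $q^mt_1t_2\cdots t_k=1$. Then $$\sum_{\text{cyclic permutations of }t_1,\ldots,t_k}\ \ \widetilde{\sum_{1\le i_1\le\cdots\le i_k\le m}}\ \frac{t_1^{1/2-i_1}\cdots t_k^{1/2-i_k}}{(q)_{i_1-1}(q^{i_1}t_1)_{i_2-i_1}(q^{i_2}t_1t_2)_{i_3-i_2}\cdots(q^{i_k}t_1\cdots t_k)_{m-i_k}}=(-1)^{m-1}\frac{q^{m^2/2}m^{k-1}}{(k-1)!}.$$
   Context: $(a)_n:=\prod_{j=0}^{n-1}(1-aq^j)$. For a function $f(i_1,\ldots,i_k)$, $\widetilde{\sum}_{1\le i_1\le\cdots\le i_k\le m}f:=\sum_{1\le i_1\le\cdots\le i_k\le m}f(i_1,\ldots,i_k)/\#\mathrm{Stab}(i_1,\ldots,i_k)$, with $\mathrm{Stab}$ the set of permutations of $\{1,\ldots,k\}$ fixing the tuple $(i_1,\ldots,i_k)$. The outer sum is over the $k$ cyclic rotations $(t_1,\ldots,t_k)\mapsto(t_{j+1},\ldots,t_k,t_1,\ldots,t_j)$ applied to the variables of the summand. Square roots are chosen with $t_1^{1/2}\cdots t_k^{1/2}=(q^{1/2})^{-m}$ and $q^{m^2/2}=(q^{1/2})^{m^2}$. *)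

theory Defs
  imports Complex_Main "HOL-Library.FuncSet" "HOL-Combinatorics.Permutations"
begin

definition qpoch :: "complex \<Rightarrow> complex \<Rightarrow> nat \<Rightarrow> complex" where
  "qpoch a q n = (\<Prod>j<n. (1 - a * q ^ j))"

text \<open>Nondecreasing tuples (i_1,...,i_k) with 1 <= i_1 <= ... <= i_k <= m,
  stored 0-indexed as functions on {0..<k}.\<close>
definition nondec_tuples :: "nat \<Rightarrow> nat \<Rightarrow> (nat \<Rightarrow> nat) set" where
  "nondec_tuples k m =
     {i \<in> {0..<k} \<rightarrow>\<^sub>E {1..m}. \<forall>j. Suc j < k \<longrightarrow> i j \<le> i (Suc j)}"

definition stab_card :: "nat \<Rightarrow> (nat \<Rightarrow> nat) \<Rightarrow> nat" where
  "stab_card k i = card {p. p permutes {0..<k} \<and> (\<forall>j<k. i (p j) = i j)}"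

definition denom :: "complex \<Rightarrow> (nat \<Rightarrow> complex) \<Rightarrow> nat \<Rightarrow> nat \<Rightarrow> (nat \<Rightarrow> nat) \<Rightarrow> complex" where
  "denom q t k m i =
     qpoch q q (i 0 - 1) *
     (\<Prod>j<k. qpoch (q ^ i j * (\<Prod>l\<le>j. t l)) q
                 ((if Suc j < k then i (Suc j) else m) - i j))"

text \<open>Summand: t_1^{1/2-i_1}...t_k^{1/2-i_k} / denominator, where s j is the
  chosen square root t_j^{1/2}, so t_j^{1/2 - i_j} = s_j / t_j^{i_j}.\<close>
definition summand :: "complex \<Rightarrow> (nat \<Rightarrow> complex) \<Rightarrow> (nat \<Rightarrow> complex) \<Rightarrow> nat \<Rightarrow> nat
    \<Rightarrow> (nat \<Rightarrow> nat) \<Rightarrow> complex" where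
  "summand q t s k m i = (\<Prod>j<k. s j / t j ^ i j) / denom q t k m i"

text \<open>The weighted sum over nondecreasing tuples (weight 1/#Stab).\<close>
definition tilde_sum :: "complex \<Rightarrow> (nat \<Rightarrow> complex) \<Rightarrow> (nat \<Rightarrow> complex) \<Rightarrow> nat \<Rightarrow> nat \<Rightarrow> complex" where
  "tilde_sum q t s k m =
     (\<Sum>i\<in>nondec_tuples k m. summand q t s k m i / of_nat (stab_card k i))"

definition rot :: "nat \<Rightarrow> nat \<Rightarrow> (nat \<Rightarrow> 'a) \<Rightarrow> nat \<Rightarrow> 'a" where
  "rot k c f = (\<lambda>j. f ((j + c) mod k))"

end

theory Submission
  imports Defs "HOL-Computational_Algebra.Polynomial"
begin

text \<open>
  Fix a rotation c and a tuple i, and write u for the rotated variables. The denominator is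
  prod_{l=1..m-1} (1 - y_l) for the nodes y_l = q^l u_1...u_j, where j = #{p. i_p <= l}, and
  y_0 = 1. Using q^m t_1...t_k = 1, the summand becomes (-1)^(m-1) q^(m^2/2) times the
  Lagrange weight prod_{b /= 0} y_b / (y_b - y_0) of the node y_0.

  The map (c, i) |-> (c + n, (1,...,1, i_1 + 1,...,i_n + 1)), where n counts the entries of i
  below m, permutes the pairs, preserves stabilisers, and replaces the nodes by a constant
  multiple of the nodes rotated by one step. Hence the stabiliser-weighted sum over all pairs
  of the Lagrange weight of the node y_a does not depend on a. As the Lagrange weights of all
  nodes add up to 1, m times this sum equals k * sum_i 1/#Stab(i) = k m^k / k!, the last
  step being orbit counting for the permutation action on {1..m}^k.
\<close>

section \<open>Lagrange interpolation\<close>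

lemma sum_lagrange_basis:
  fixes w :: "'b \<Rightarrow> 'a::field"
  assumes fin: "finite I" and inj: "inj_on w I" and ne: "I \<noteq> {}"
  shows "(\<Sum>a\<in>I. \<Prod>b\<in>I - {a}. (x - w b) / (w a - w b)) = 1"
proof -
  define L where "L = (\<Sum>a\<in>I. \<Prod>b\<in>I - {a}. smult (inverse (w a - w b)) [:- w b, 1:])"
  have poly_L: "poly L y = (\<Sum>a\<in>I. \<Prod>b\<in>I - {a}. (y - w b) / (w a - w b))" for y
    by (simp add: L_def poly_sum poly_prod divide_inverse left_diff_distrib mult.commute)
  have "degree L \<le> card I - 1"
    unfolding L_def
  proof (rule degree_sum_le[OF fin])
    fix a assume "a \<in> I"
    have "degree (\<Prod>b\<in>I - {a}. smult (inverse (w a - w b)) [:- w b, 1:]) \<le> (\<Sum>b\<in>I - {a}. 1)"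
      using fin by (intro order.trans[OF degree_prod_sum_le] sum_mono)
        (auto intro: order.trans[OF degree_smult_le])
    then show "degree (\<Prod>b\<in>I - {a}. smult (inverse (w a - w b)) [:- w b, 1:]) \<le> card I - 1"
      using \<open>a \<in> I\<close> fin by simp
  qed
  moreover have "poly L (w c) = 1" if c: "c \<in> I" for c
  proof -
    have "(\<Prod>b\<in>I - {a}. (w c - w b) / (w a - w b)) = (if a = c then 1 else 0)" if "a \<in> I" for a
    proof (cases "a = c")
      case True
      have "w c \<noteq> w b" if "b \<in> I - {c}" for b
        using inj c that by (auto dest: inj_onD)
      then show ?thesis using True by (simp add: prod.neutral)
    next
      case False
      then show ?thesis using fin c by (intro trans[OF prod_zero]) auto
    qed
    then show ?thesis unfolding poly_L using fin c by (simp cong: sum.cong)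
  qed
  moreover have "card I > 0"
    using fin ne by (simp add: card_gt_0_iff)
  ultimately have "L = 1"
    using card_image[OF inj] by (intro poly_eqI_degree[of "w ` I"]) auto
  then show ?thesis using poly_L[of x] by simp
qed

definition lagrange_weight :: "('b \<Rightarrow> 'a::field) \<Rightarrow> 'b set \<Rightarrow> 'b \<Rightarrow> 'a" where
  "lagrange_weight w I a = (\<Prod>b\<in>I - {a}. w b / (w b - w a))"

lemma sum_lagrange_weight:
  assumes "finite I" "inj_on w I" "I \<noteq> {}"
  shows "(\<Sum>a\<in>I. lagrange_weight w I a) = 1"
proof -
  have "w b / (w b - w a) = (0 - w b) / (w a - w b)" for a b
    by (simp add: minus_divide_right)
  then show ?thesis
    unfolding lagrange_weight_def using sum_lagrange_basis[OF assms, of 0] by simp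
qed

lemma lagrange_weight_transfer:
  fixes w v :: "'b \<Rightarrow> 'a::field"
  assumes h: "bij_betw h I J" and c: "c \<noteq> 0" and v: "\<And>x. x \<in> I \<Longrightarrow> v x = c * w (h x)"
    and a: "a \<in> I"
  shows "lagrange_weight v I a = lagrange_weight w J (h a)"
proof -
  have "lagrange_weight v I a = (\<Prod>b\<in>I - {a}. w (h b) / (w (h b) - w (h a)))"
    unfolding lagrange_weight_def using a c v
    by (intro prod.cong) (auto simp: right_diff_distrib[symmetric])
  also have "\<dots> = (\<Prod>b\<in>h ` (I - {a}). w b / (w b - w (h a)))"
    using bij_betw_imp_inj_on[OF h] by (simp add: prod.reindex inj_on_diff)
  also have "h ` (I - {a}) = J - {h a}"
    using a h inj_on_image_set_diff[OF bij_betw_imp_inj_on[OF h], of I "{a}"]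
    by (simp add: bij_betw_def)
  finally show ?thesis unfolding lagrange_weight_def .
qed

section \<open>Nondecreasing tuples and orbit counting\<close>

lemma nondec_tuples_range:
  assumes "i \<in> nondec_tuples k m" "j < k"
  shows "1 \<le> i j" "i j \<le> m"
  using assms unfolding nondec_tuples_def by auto

lemma nondec_tuples_mono:
  assumes i: "i \<in> nondec_tuples k m" and "j \<le> j'" "j' < k"
  shows "i j \<le> i j'"
  using assms(2,3)
proof (induction j' rule: dec_induct)
  case (step n)
  then show ?case
    using i unfolding nondec_tuples_def by (auto intro: order.trans)
qed simp

lemma nondec_tuples_eqI:
  assumes "i \<in> nondec_tuples k m" "i' \<in> nondec_tuples k m" "\<And>j. j < k \<Longrightarrow> i j = i' j"
  shows "i = i'"
proof
  fix j
  show "i j = i' j"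
    using assms by (cases "j < k") (auto simp: nondec_tuples_def PiE_def extensional_def)
qed

lemma finite_nondec_tuples: "finite (nondec_tuples k m)"
  unfolding nondec_tuples_def by (rule finite_subset[of _ "{0..<k} \<rightarrow>\<^sub>E {1..m}"]) (auto intro: finite_PiE)

lemma sorted_nondec_tuple:
  assumes "i \<in> nondec_tuples k m"
  shows "sorted (map i [0..<k])"
  unfolding sorted_iff_nth_mono using nondec_tuples_mono[OF assms] by auto

lemma stab_card_pos: "stab_card k i > 0"
proof -
  have "finite {p. p permutes {0..<k} \<and> (\<forall>j<k. i (p j) = i j)}"
    by (rule finite_subset[OF _ finite_permutations[of "{0..<k}"]]) auto
  moreover have "id \<in> {p. p permutes {0..<k} \<and> (\<forall>j<k. i (p j) = i j)}"
    by simp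
  ultimately show ?thesis
    unfolding stab_card_def by (subst card_gt_0_iff) blast
qed

lemma stab_card_conj:
  assumes tau: "tau permutes {0..<k}" and h: "inj_on h (i ` {0..<k})"
    and i': "\<And>j. j < k \<Longrightarrow> i' j = h (i (tau j))"
  shows "stab_card k i' = stab_card k i"
proof -
  let ?stab = "\<lambda>i. {p. p permutes {0..<k} \<and> (\<forall>j<k. i (p j) = i j)}"
  have tau_in: "tau j < k" and inv_in: "inv tau j < k" if "j < k" for j
    using permutes_in_image[OF tau] permutes_in_image[OF permutes_inv[OF tau]] that by auto
  have "bij_betw (\<lambda>p. tau \<circ> p \<circ> inv tau) (?stab i') (?stab i)"
  proof (rule bij_betw_byWitness[where f' = "\<lambda>s. inv tau \<circ> s \<circ> tau"])
    show "\<forall>p\<in>?stab i'. inv tau \<circ> (tau \<circ> p \<circ> inv tau) \<circ> tau = p"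
      "\<forall>s\<in>?stab i. tau \<circ> (inv tau \<circ> s \<circ> tau) \<circ> inv tau = s"
      using permutes_inv_o[OF tau] by (auto simp: fun_eq_iff o_def)
    show "(\<lambda>p. tau \<circ> p \<circ> inv tau) ` ?stab i' \<subseteq> ?stab i"
    proof safe
      fix p assume p: "p permutes {0..<k}" "\<forall>j<k. i' (p j) = i' j"
      show "(tau \<circ> p \<circ> inv tau) permutes {0..<k}"
        by (intro permutes_compose[OF permutes_inv[OF tau]] permutes_compose[OF _ tau] p(1))
      fix j assume j: "j < k"
      have pj: "p (inv tau j) < k"
        using permutes_in_image[OF p(1)] inv_in[OF j] by simp
      have "h (i (tau (p (inv tau j)))) = h (i (tau (inv tau j)))"
        using p(2) i'[OF inv_in[OF j]] i'[OF pj] inv_in[OF j] by simp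
      then have "i (tau (p (inv tau j))) = i (tau (inv tau j))"
        using h tau_in[OF pj] tau_in[OF inv_in[OF j]] by (auto dest: inj_onD)
      then show "i ((tau \<circ> p \<circ> inv tau) j) = i j"
        using permutes_inverses(1)[OF tau] by simp
    qed
    show "(\<lambda>s. inv tau \<circ> s \<circ> tau) ` ?stab i \<subseteq> ?stab i'"
    proof safe
      fix s assume s: "s permutes {0..<k}" "\<forall>j<k. i (s j) = i j"
      show "(inv tau \<circ> s \<circ> tau) permutes {0..<k}"
        by (intro permutes_compose[OF tau] permutes_compose[OF _ permutes_inv[OF tau]] s(1))
      fix j assume j: "j < k"
      have sj: "s (tau j) < k"
        using permutes_in_image[OF s(1)] tau_in[OF j] by simp
      have "i' (inv tau (s (tau j))) = h (i (s (tau j)))"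
        using i'[OF inv_in[OF sj]] permutes_inverses(1)[OF tau] by simp
      also have "\<dots> = i' j"
        using s(2) tau_in[OF j] i'[OF j] by simp
      finally show "i' ((inv tau \<circ> s \<circ> tau) j) = i' j"
        by simp
    qed
  qed
  then show ?thesis
    unfolding stab_card_def by (rule bij_betw_same_card)
qed

definition tuple_orbit :: "nat \<Rightarrow> (nat \<Rightarrow> 'a) \<Rightarrow> (nat \<Rightarrow> 'a) set" where
  "tuple_orbit k i = (\<lambda>p. i \<circ> p) ` {p. p permutes {0..<k}}"

lemma card_compose_perm_fiber:
  assumes p0: "p0 permutes {0..<k}"
  shows "card {p. p permutes {0..<k} \<and> i \<circ> p = i \<circ> p0} = stab_card k i"
proof -
  let ?stab = "{p. p permutes {0..<k} \<and> (\<forall>j<k. i (p j) = i j)}"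
  have "bij_betw (\<lambda>p. p \<circ> inv p0) {p. p permutes {0..<k} \<and> i \<circ> p = i \<circ> p0} ?stab"
  proof (rule bij_betw_byWitness[where f' = "\<lambda>s. s \<circ> p0"])
    show "\<forall>p\<in>{p. p permutes {0..<k} \<and> i \<circ> p = i \<circ> p0}. p \<circ> inv p0 \<circ> p0 = p"
      "\<forall>s\<in>?stab. s \<circ> p0 \<circ> inv p0 = s"
      using permutes_inv_o[OF p0] by (auto simp: o_assoc[symmetric])
    show "(\<lambda>p. p \<circ> inv p0) ` {p. p permutes {0..<k} \<and> i \<circ> p = i \<circ> p0} \<subseteq> ?stab"
    proof safe
      fix p assume p: "p permutes {0..<k}" "i \<circ> p = i \<circ> p0"
      show "(p \<circ> inv p0) permutes {0..<k}"
        by (rule permutes_compose[OF permutes_inv[OF p0] p(1)])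
      fix j
      have "i (p (inv p0 j)) = i (p0 (inv p0 j))"
        using p(2) by (metis comp_apply)
      then show "i ((p \<circ> inv p0) j) = i j"
        using permutes_inverses(1)[OF p0] by simp
    qed
    show "(\<lambda>s. s \<circ> p0) ` ?stab \<subseteq> {p. p permutes {0..<k} \<and> i \<circ> p = i \<circ> p0}"
    proof safe
      fix s assume s: "s permutes {0..<k}" "\<forall>j<k. i (s j) = i j"
      show "(s \<circ> p0) permutes {0..<k}"
        by (rule permutes_compose[OF p0 s(1)])
      have "i (s (p0 x)) = i (p0 x)" for x
        using s permutes_not_in[OF s(1), of "p0 x"] by (cases "p0 x < k") auto
      then show "i \<circ> (s \<circ> p0) = i \<circ> p0"
        by auto
    qed
  qed
  then show ?thesis
    unfolding stab_card_def by (rule bij_betw_same_card)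
qed

lemma card_tuple_orbit: "card (tuple_orbit k i) * stab_card k i = fact k"
proof -
  let ?P = "{p. p permutes {0..<k}}"
  let ?F = "\<lambda>g. {p. p permutes {0..<k} \<and> i \<circ> p = g}"
  have P: "?P = (\<Union>g\<in>tuple_orbit k i. ?F g)"
    unfolding tuple_orbit_def by auto
  have "card ?P = (\<Sum>g\<in>tuple_orbit k i. card (?F g))"
    unfolding P using finite_permutations[of "{0..<k}"]
    by (intro card_UN_disjoint) (auto simp: tuple_orbit_def)
  also have "\<dots> = (\<Sum>g\<in>tuple_orbit k i. stab_card k i)"
    by (intro sum.cong) (auto simp: tuple_orbit_def card_compose_perm_fiber)
  finally show ?thesis
    using card_permutations[of "{0..<k}" k] by simp
qed

lemma tuple_orbit_subset:
  assumes "i \<in> {0..<k} \<rightarrow>\<^sub>E A"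
  shows "tuple_orbit k i \<subseteq> {0..<k} \<rightarrow>\<^sub>E A"
proof
  fix g assume "g \<in> tuple_orbit k i"
  then obtain p where p: "p permutes {0..<k}" "g = i \<circ> p"
    unfolding tuple_orbit_def by auto
  show "g \<in> {0..<k} \<rightarrow>\<^sub>E A"
    using assms permutes_in_image[OF p(1)] permutes_not_in[OF p(1)]
    by (auto simp: p(2) PiE_def extensional_def)
qed

lemma ex_nondec_tuple_orbit:
  assumes g: "g \<in> {0..<k} \<rightarrow>\<^sub>E {1..m}"
  shows "\<exists>i\<in>nondec_tuples k m. g \<in> tuple_orbit k i"
proof -
  define xs where "xs = map g [0..<k]"
  define i where "i = (\<lambda>j. if j < k then sort xs ! j else undefined)"
  have len: "length (sort xs) = k"
    unfolding xs_def by simp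
  have "sort xs ! j \<in> {1..m}" if "j < k" for j
    using nth_mem[of j "sort xs"] that len g unfolding xs_def by auto
  then have "i \<in> nondec_tuples k m"
    unfolding nondec_tuples_def i_def using len by (auto intro: sorted_nth_mono)
  moreover obtain p where p: "p permutes {..<length (sort xs)}" "permute_list p (sort xs) = xs"
    by (rule mset_eq_permutation[of xs "sort xs"]) simp
  have p': "p permutes {0..<k}"
    using p(1) len by (simp add: lessThan_atLeast0)
  have "g j = (i \<circ> p) j" for j
  proof (cases "j < k")
    case True
    then have "xs ! j = sort xs ! p j"
      using permute_list_nth[OF p(1), of j] p(2) len by simp
    then show ?thesis
      using True permutes_in_image[OF p'] unfolding xs_def i_def by simp
  next
    case False
    then show ?thesis
      using g permutes_not_in[OF p'] unfolding i_def by (auto simp: PiE_def extensional_def)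
  qed
  then have "g \<in> tuple_orbit k i"
    using p' unfolding tuple_orbit_def by (auto simp: fun_eq_iff)
  ultimately show ?thesis by blast
qed

lemma nondec_tuple_orbit_unique:
  assumes i1: "i1 \<in> nondec_tuples k m" and i2: "i2 \<in> nondec_tuples k m"
    and g: "g \<in> tuple_orbit k i1" "g \<in> tuple_orbit k i2"
  shows "i1 = i2"
proof -
  obtain p1 p2 where p: "p1 permutes {0..<k}" "p2 permutes {0..<k}" "i1 \<circ> p1 = i2 \<circ> p2"
    using g unfolding tuple_orbit_def by auto
  define \<pi> where "\<pi> = p2 \<circ> inv p1"
  have pi: "\<pi> permutes {..<length (map i2 [0..<k])}"
    unfolding \<pi>_def using permutes_compose[OF permutes_inv[OF p(1)] p(2)]
    by (simp add: lessThan_atLeast0)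
  have "i1 j = i2 (\<pi> j)" for j
    using fun_cong[OF p(3), of "inv p1 j"] permutes_inverses(1)[OF p(1)] by (simp add: \<pi>_def)
  then have "permute_list \<pi> (map i2 [0..<k]) = map i1 [0..<k]"
    using permutes_in_image[OF pi] unfolding permute_list_def by (auto intro: nth_equalityI)
  then have "mset (map i1 [0..<k]) = mset (map i2 [0..<k])"
    using mset_permute_list[OF pi] by simp
  then have "sort (map i2 [0..<k]) = map i1 [0..<k]"
    using sorted_nondec_tuple[OF i1] by (rule properties_for_sort)
  then have "map i1 [0..<k] = map i2 [0..<k]"
    using sorted_nondec_tuple[OF i2] by (simp add: sorted_sort_id)
  then show ?thesis
    by (intro nondec_tuples_eqI[OF i1 i2]) simp
qed

lemma PiE_eq_UN_tuple_orbit: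
  "{0..<k} \<rightarrow>\<^sub>E {1..m} = (\<Union>i\<in>nondec_tuples k m. tuple_orbit k i)"
proof (intro set_eqI iffI)
  fix g assume "g \<in> {0..<k} \<rightarrow>\<^sub>E {1..m}"
  then show "g \<in> (\<Union>i\<in>nondec_tuples k m. tuple_orbit k i)"
    using ex_nondec_tuple_orbit by blast
next
  fix g assume "g \<in> (\<Union>i\<in>nondec_tuples k m. tuple_orbit k i)"
  then obtain i where "i \<in> nondec_tuples k m" "g \<in> tuple_orbit k i"
    by blast
  then show "g \<in> {0..<k} \<rightarrow>\<^sub>E {1..m}"
    using tuple_orbit_subset[of i k "{1..m}"] by (auto simp: nondec_tuples_def)
qed

lemma sum_inverse_stab_card:
  "(\<Sum>i\<in>nondec_tuples k m. 1 / of_nat (stab_card k i) :: 'a::field_char_0) = of_nat m ^ k / fact k"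
proof -
  let ?N = "nondec_tuples k m"
  have "finite (tuple_orbit k i)" for i :: "nat \<Rightarrow> nat"
    unfolding tuple_orbit_def by (simp add: finite_permutations)
  then have "card ({0..<k} \<rightarrow>\<^sub>E {1..m}) = (\<Sum>i\<in>?N. card (tuple_orbit k i))"
    unfolding PiE_eq_UN_tuple_orbit using finite_nondec_tuples nondec_tuple_orbit_unique
    by (intro card_UN_disjoint) blast+
  then have "m ^ k = (\<Sum>i\<in>?N. card (tuple_orbit k i))"
    by (simp add: card_PiE)
  then have "(of_nat m ^ k :: 'a) = (\<Sum>i\<in>?N. of_nat (card (tuple_orbit k i)))"
    by (simp flip: of_nat_power)
  also have "\<dots> = (\<Sum>i\<in>?N. fact k / of_nat (stab_card k i))"
  proof (rule sum.cong)
    fix i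
    have "(of_nat (card (tuple_orbit k i)) :: 'a) * of_nat (stab_card k i) = fact k"
      by (metis card_tuple_orbit of_nat_fact of_nat_mult)
    then show "(of_nat (card (tuple_orbit k i)) :: 'a) = fact k / of_nat (stab_card k i)"
      using stab_card_pos[of k i] by (simp add: eq_divide_eq)
  qed simp
  also have "\<dots> = fact k * (\<Sum>i\<in>?N. 1 / of_nat (stab_card k i))"
    by (simp add: sum_distrib_left)
  finally show ?thesis
    by (simp add: eq_divide_eq mult.commute)
qed

section \<open>The summand as a Lagrange weight\<close>

definition partial_prod :: "nat \<Rightarrow> (nat \<Rightarrow> 'a::comm_monoid_mult) \<Rightarrow> (nat \<Rightarrow> nat) \<Rightarrow> nat \<Rightarrow> 'a" where
  "partial_prod k u i l = (\<Prod>p | p < k \<and> i p \<le> l. u p)"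

definition node :: "'a::comm_monoid_mult \<Rightarrow> nat \<Rightarrow> (nat \<Rightarrow> 'a) \<Rightarrow> (nat \<Rightarrow> nat) \<Rightarrow> nat \<Rightarrow> 'a" where
  "node q k u i l = q ^ l * partial_prod k u i l"

lemma node_0:
  assumes "i \<in> nondec_tuples k m"
  shows "node q k u i 0 = 1"
proof -
  have "{p. p < k \<and> i p \<le> 0} = {}"
    using nondec_tuples_range(1)[OF assms] by force
  then show ?thesis
    unfolding node_def partial_prod_def by (simp only:) simp
qed

lemma prod_blocks_nondec_tuple:
  fixes F :: "nat \<Rightarrow> nat set \<Rightarrow> 'a::comm_monoid_mult"
  assumes i: "i \<in> nondec_tuples k m" and "k' \<le> k" "\<forall>j<k'. i j \<le> M"
  shows "(\<Prod>l\<in>{1..<(if k' = 0 then M else i 0)}. F l {}) *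
         (\<Prod>j<k'. \<Prod>l\<in>{i j..<(if Suc j < k' then i (Suc j) else M)}. F l {..j})
       = (\<Prod>l\<in>{1..<M}. F l {j. j < k' \<and> i j \<le> l})"
  using assms(2,3)
proof (induction k' arbitrary: M)
  case (Suc k')
  have ik: "i k' \<le> M" "1 \<le> i k'"
    using Suc.prems nondec_tuples_range[OF i] by auto
  have IH: "(\<Prod>l\<in>{1..<(if k' = 0 then i k' else i 0)}. F l {}) *
      (\<Prod>j<k'. \<Prod>l\<in>{i j..<(if Suc j < k' then i (Suc j) else i k')}. F l {..j})
      = (\<Prod>l\<in>{1..<i k'}. F l {j. j < k' \<and> i j \<le> l})"
    using Suc.prems nondec_tuples_mono[OF i] by (intro Suc.IH) auto
  have first: "(if k' = 0 then i k' else i 0) = i 0"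
    by simp
  have blocks: "(\<Prod>j<k'. \<Prod>l\<in>{i j..<(if Suc j < k' then i (Suc j) else i k')}. F l {..j})
      = (\<Prod>j<k'. \<Prod>l\<in>{i j..<(if Suc j < Suc k' then i (Suc j) else M)}. F l {..j})"
    by (rule prod.cong) (auto simp: less_Suc_eq)
  have below: "(\<Prod>l\<in>{1..<i k'}. F l {j. j < k' \<and> i j \<le> l})
      = (\<Prod>l\<in>{1..<i k'}. F l {j. j < Suc k' \<and> i j \<le> l})"
    by (intro prod.cong arg_cong[where f = "F _"]) (auto simp: less_Suc_eq)
  have above: "(\<Prod>l\<in>{i k'..<M}. F l {..k'}) = (\<Prod>l\<in>{i k'..<M}. F l {j. j < Suc k' \<and> i j \<le> l})"
    using Suc.prems nondec_tuples_mono[OF i, of _ k']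
    by (intro prod.cong arg_cong[where f = "F _"]) (force simp: less_Suc_eq_le)+
  have "{1..<M} = {1..<i k'} \<union> {i k'..<M}"
    using ik by auto
  then have "(\<Prod>l\<in>{1..<M}. F l {j. j < Suc k' \<and> i j \<le> l}) =
      (\<Prod>l\<in>{1..<i k'}. F l {j. j < Suc k' \<and> i j \<le> l}) *
      (\<Prod>l\<in>{i k'..<M}. F l {j. j < Suc k' \<and> i j \<le> l})"
    by (simp add: prod.union_disjoint)
  then show ?case
    using IH unfolding first blocks below above[symmetric] by (simp add: mult.assoc[symmetric])
qed simp

lemma denom_eq_prod_node:
  assumes i: "i \<in> nondec_tuples k m" and k: "k > 0"
  shows "denom q u k m i = (\<Prod>l\<in>{1..<m}. 1 - node q k u i l)"
proof -
  define F where "F = (\<lambda>l A. 1 - q ^ l * (\<Prod>p\<in>A. u p))"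
  have first: "qpoch q q (i 0 - 1) = (\<Prod>l\<in>{1..<i 0}. F l {})"
    using nondec_tuples_range(1)[OF i k] unfolding qpoch_def F_def
    by (subst prod.atLeastLessThan_shift_0) (simp add: lessThan_atLeast0)
  have block: "qpoch (q ^ i j * (\<Prod>l\<le>j. u l)) q ((if Suc j < k then i (Suc j) else m) - i j)
      = (\<Prod>l\<in>{i j..<(if Suc j < k then i (Suc j) else m)}. F l {..j})" if "j < k" for j
    unfolding qpoch_def F_def
    by (subst prod.atLeastLessThan_shift_0) (simp add: lessThan_atLeast0 power_add mult_ac)
  have "denom q u k m i = (\<Prod>l\<in>{1..<(if k = 0 then m else i 0)}. F l {}) *
      (\<Prod>j<k. \<Prod>l\<in>{i j..<(if Suc j < k then i (Suc j) else m)}. F l {..j})"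
    unfolding denom_def first using k block by simp
  also have "\<dots> = (\<Prod>l\<in>{1..<m}. F l {j. j < k \<and> i j \<le> l})"
    using nondec_tuples_range(2)[OF i] by (intro prod_blocks_nondec_tuple[OF i]) auto
  finally show ?thesis
    unfolding F_def node_def partial_prod_def .
qed

lemma prod_partial_prod:
  fixes u :: "nat \<Rightarrow> 'a::comm_semiring_1"
  assumes i: "i \<in> nondec_tuples k m"
  shows "(\<Prod>l\<in>{1..<m}. partial_prod k u i l) * (\<Prod>p<k. u p ^ i p) = (\<Prod>p<k. u p) ^ m"
proof -
  have "(\<Prod>l\<in>{1..<m}. partial_prod k u i l) = (\<Prod>l\<in>{1..<m}. \<Prod>p\<in>{p\<in>{..<k}. i p \<le> l}. u p)"
    unfolding partial_prod_def by (intro prod.cong) auto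
  also have "\<dots> = (\<Prod>p\<in>{..<k}. \<Prod>l\<in>{l\<in>{1..<m}. i p \<le> l}. u p)"
    by (rule prod.swap_restrict) auto
  also have "\<dots> = (\<Prod>p<k. u p ^ (m - i p))"
  proof (rule prod.cong)
    fix p assume "p \<in> {..<k}"
    then have "{l\<in>{1..<m}. i p \<le> l} = {i p..<m}"
      using nondec_tuples_range(1)[OF i, of p] by auto
    then show "(\<Prod>l\<in>{l\<in>{1..<m}. i p \<le> l}. u p) = u p ^ (m - i p)"
      by simp
  qed simp
  finally have "(\<Prod>l\<in>{1..<m}. partial_prod k u i l) * (\<Prod>p<k. u p ^ i p)
      = (\<Prod>p<k. u p ^ (m - i p) * u p ^ i p)"
    by (simp add: prod.distrib)
  also have "\<dots> = (\<Prod>p<k. u p ^ m)"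
    using nondec_tuples_range(2)[OF i] by (intro prod.cong) (auto simp flip: power_add)
  finally show ?thesis
    by (simp add: prod_power_distrib)
qed

lemma double_sum_atLeast1_lessThan: "2 * (\<Sum>l\<in>{1..<m}. l) = m * (m - 1 :: nat)"
  by (induction m) (auto simp: atLeastLessThanSuc algebra_simps)

lemma lagrange_weight_node_0:
  fixes q :: complex
  assumes i: "i \<in> nondec_tuples k m" and k: "k > 0"
  shows "lagrange_weight (node q k u i) {..<m} 0
       = (-1) ^ (m - 1) * ((\<Prod>l\<in>{1..<m}. node q k u i l) / denom q u k m i)"
proof -
  let ?y = "node q k u i"
  have "lagrange_weight ?y {..<m} 0 = (\<Prod>l\<in>{1..<m}. (-1) * (?y l / (1 - ?y l)))"
    unfolding lagrange_weight_def node_0[OF i]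
    by (intro prod.cong) (auto simp: minus_divide_right)
  also have "\<dots> = (-1) ^ (m - 1) * ((\<Prod>l\<in>{1..<m}. ?y l) / denom q u k m i)"
    by (subst prod.distrib) (simp add: denom_eq_prod_node[OF i k] prod_dividef)
  finally show ?thesis .
qed

lemma prod_node_eq:
  fixes q r :: complex
  assumes i: "i \<in> nondec_tuples k m"
    and u: "q ^ m * (\<Prod>j<k. u j) = 1" and r: "r ^ 2 = q" and Q: "(\<Prod>p<k. u p ^ i p) \<noteq> 0"
  shows "(\<Prod>l\<in>{1..<m}. node q k u i l) = r ^ (m * (m - 1)) / (r ^ (2 * m * m) * (\<Prod>p<k. u p ^ i p))"
proof -
  have "(\<Prod>l\<in>{1..<m}. node q k u i l) = q ^ (\<Sum>l\<in>{1..<m}. l) * ((\<Prod>j<k. u j) ^ m / (\<Prod>p<k. u p ^ i p))"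
    using prod_partial_prod[OF i, of u] Q by (simp add: node_def prod.distrib power_sum eq_divide_eq)
  moreover have "q ^ (\<Sum>l\<in>{1..<m}. l) = r ^ (m * (m - 1))"
    using double_sum_atLeast1_lessThan[of m] r by (metis power_mult)
  moreover have "(\<Prod>j<k. u j) = 1 / q ^ m"
  proof -
    have "q ^ m \<noteq> 0"
      using u by (metis mult_zero_left zero_neq_one)
    then show ?thesis
      using u by (simp add: eq_divide_eq mult.commute)
  qed
  moreover have "r ^ (2 * m * m) = (q ^ m) ^ m"
    using r by (simp add: power_mult)
  ultimately show ?thesis
    by (simp add: power_one_over)
qed

lemma summand_eq_lagrange_weight:
  fixes q r :: complex
  assumes i: "i \<in> nondec_tuples k m" and k: "k > 0" and m: "m > 0"
    and u: "q ^ m * (\<Prod>j<k. u j) = 1" and r: "r ^ 2 = q"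
    and s: "(\<Prod>j<k. s j) = inverse (r ^ m)"
  shows "summand q u s k m i = (-1) ^ (m - 1) * r ^ (m ^ 2) * lagrange_weight (node q k u i) {..<m} 0"
proof -
  define Q where "Q = (\<Prod>p<k. u p ^ i p)"
  have "(\<Prod>j<k. u j) \<noteq> 0" "q \<noteq> 0"
    using u m by (metis mult_zero_right zero_neq_one, metis mult_zero_left power_0_left zero_neq_one not_gr0)
  then have "Q \<noteq> 0" "r \<noteq> 0"
    using r by (auto simp: Q_def)
  have "summand q u s k m i = inverse (r ^ m) / Q / denom q u k m i"
    unfolding summand_def Q_def prod_dividef s ..
  also have "inverse (r ^ m) = r ^ (m ^ 2) * r ^ (m * (m - 1)) / r ^ (2 * m * m)"
  proof -
    have "m + (m ^ 2 + m * (m - 1)) = 2 * m * m"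
      using m by (cases m) (auto simp: power2_eq_square algebra_simps)
    then have "r ^ m * (r ^ (m ^ 2) * r ^ (m * (m - 1))) = r ^ (2 * m * m)"
      by (metis power_add)
    then show ?thesis
      using \<open>r \<noteq> 0\<close> by (simp add: field_simps)
  qed
  finally show ?thesis
    unfolding lagrange_weight_node_0[OF i k] prod_node_eq[OF i u r \<open>Q \<noteq> 0\<close>[unfolded Q_def]]
    by (simp add: Q_def field_simps flip: power_add)
qed

section \<open>The cyclic shift of rotations and tuples\<close>

lemma rot_rot: "rot k n (rot k c t) = rot k ((c + n) mod k) t"
proof
  fix j
  have "((j + n) mod k + c) mod k = (j + (c + n) mod k) mod k"
    by (simp add: mod_add_left_eq mod_add_right_eq add.commute add.left_commute)
  then show "rot k n (rot k c t) j = rot k ((c + n) mod k) t j"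
    by (simp add: rot_def)
qed

lemma bij_betw_add_mod:
  fixes k c :: nat
  assumes "k > 0"
  shows "bij_betw (\<lambda>j. (j + c) mod k) {..<k} {..<k}"
proof -
  have "inj_on (\<lambda>j. (j + c) mod k) {..<k}"
  proof (rule inj_onI)
    fix x y assume xy: "x \<in> {..<k}" "y \<in> {..<k}" and eq: "(x + c) mod k = (y + c) mod k"
    from eq have "x mod k = y mod k"
      by (simp add: nat_mod_eq_iff)
    then show "x = y"
      using xy by simp
  qed
  moreover have "(\<lambda>j. (j + c) mod k) ` {..<k} \<subseteq> {..<k}"
    using assms by auto
  ultimately show ?thesis
    by (simp add: bij_betw_def endo_inj_surj)
qed

lemma prod_rot: "(\<Prod>j<k. rot k c u j) = (\<Prod>j<k. u j)"
proof (cases "k = 0")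
  case False
  then show ?thesis
    using prod.reindex_bij_betw[OF bij_betw_add_mod[of k c], of u] by (simp add: rot_def)
qed simp

lemma down_closed_eq_lessThan_card:
  assumes "S \<subseteq> {..<k}" "\<And>p p'. p \<in> S \<Longrightarrow> p' < p \<Longrightarrow> p' \<in> S"
  shows "S = {..<card S}"
proof (intro set_eqI iffI)
  have fin: "finite S"
    using assms(1) finite_subset by blast
  fix p
  show "p \<in> {..<card S}" if "p \<in> S"
  proof -
    have "{..p} \<subseteq> S"
      using assms(2) that by (auto simp: le_less)
    then have "card {..p} \<le> card S"
      by (rule card_mono[OF fin])
    then show ?thesis
      by simp
  qed
  show "p \<in> S" if "p \<in> {..<card S}"
  proof (rule ccontr)
    assume "p \<notin> S"
    then have "S \<subseteq> {..<p}"
      using assms(2) by (force simp: not_less le_less)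
    then have "card S \<le> p"
      using card_mono[of "{..<p}" S] by simp
    then show False
      using that by simp
  qed
qed

definition num_below :: "nat \<Rightarrow> nat \<Rightarrow> (nat \<Rightarrow> nat) \<Rightarrow> nat" where
  "num_below k m i = card {j. j < k \<and> i j < m}"

lemma lessThan_num_below:
  assumes i: "i \<in> nondec_tuples k m"
  shows "{j. j < k \<and> i j < m} = {..<num_below k m i}"
  unfolding num_below_def
proof (rule down_closed_eq_lessThan_card[where k = k])
  fix p p' assume "p \<in> {j. j < k \<and> i j < m}" "p' < p"
  then show "p' \<in> {j. j < k \<and> i j < m}"
    using nondec_tuples_mono[OF i, of p' p] by auto
qed auto

lemma num_below_le:
  assumes "i \<in> nondec_tuples k m"
  shows "num_below k m i \<le> k"
proof -
  have "{..<num_below k m i} \<subseteq> {..<k}"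
    unfolding lessThan_num_below[OF assms, symmetric] by auto
  then show ?thesis
    by simp
qed

lemma less_num_below_iff:
  assumes "i \<in> nondec_tuples k m" "j < k"
  shows "i j < m \<longleftrightarrow> j < num_below k m i"
  using assms lessThan_num_below[OF assms(1)] by (auto simp: set_eq_iff)

definition shift_tuple :: "nat \<Rightarrow> nat \<Rightarrow> (nat \<Rightarrow> nat) \<Rightarrow> nat \<Rightarrow> nat" where
  "shift_tuple k m i = (\<lambda>j. if j < k then
     if j < k - num_below k m i then 1 else Suc (i (j - (k - num_below k m i)))
     else undefined)"

definition cyclic_shift :: "nat \<Rightarrow> nat \<Rightarrow> nat \<times> (nat \<Rightarrow> nat) \<Rightarrow> nat \<times> (nat \<Rightarrow> nat)" where
  "cyclic_shift k m = (\<lambda>(c, i). ((c + num_below k m i) mod k, shift_tuple k m i))"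

lemma shift_tuple_in_nondec_tuples:
  assumes i: "i \<in> nondec_tuples k m"
  shows "shift_tuple k m i \<in> nondec_tuples k m"
proof -
  let ?n = "num_below k m i"
  note n = num_below_le[OF i] less_num_below_iff[OF i]
  have "shift_tuple k m i j \<in> {1..m}" if j: "j < k" for j
  proof (cases "j < k - ?n")
    case True
    then show ?thesis
      using j nondec_tuples_range[OF i j] by (simp add: shift_tuple_def)
  next
    case False
    then have "i (j - (k - ?n)) < m"
      using j n by simp
    then show ?thesis
      using j False by (simp add: shift_tuple_def)
  qed
  moreover have "shift_tuple k m i j \<le> shift_tuple k m i (Suc j)" if "Suc j < k" for j
    using that nondec_tuples_mono[OF i, of "j - (k - ?n)" "Suc j - (k - ?n)"] n(1)
    by (auto simp: shift_tuple_def)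
  ultimately show ?thesis
    unfolding nondec_tuples_def by (auto simp: shift_tuple_def)
qed

lemma stab_card_shift_tuple:
  assumes i: "i \<in> nondec_tuples k m" and k: "k > 0"
  shows "stab_card k (shift_tuple k m i) = stab_card k i"
proof -
  let ?n = "num_below k m i"
  note n = num_below_le[OF i] less_num_below_iff[OF i]
  define tau where "tau j = (if j < k then (j + ?n) mod k else j)" for j
  define h where "h v = (if v < m then Suc v else 1)" for v
  have "bij_betw tau {..<k} {..<k}"
    using bij_betw_add_mod[OF k, of ?n] by (rule bij_betw_cong[THEN iffD1, rotated]) (simp add: tau_def)
  then have "tau permutes {0..<k}"
    by (intro bij_imp_permutes) (auto simp: tau_def lessThan_atLeast0)
  moreover have "inj_on h (i ` {0..<k})"
  proof (rule inj_onI)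
    fix a b assume "a \<in> i ` {0..<k}" "b \<in> i ` {0..<k}" and eq: "h a = h b"
    then have "1 \<le> a" "a \<le> m" "1 \<le> b" "b \<le> m"
      using nondec_tuples_range[OF i] by auto
    with eq show "a = b"
      unfolding h_def by (cases "a < m"; cases "b < m") auto
  qed
  moreover have "shift_tuple k m i j = h (i (tau j))" if j: "j < k" for j
  proof (cases "j < k - ?n")
    case True
    then have "tau j = j + ?n" "\<not> i (j + ?n) < m"
      using j n by (auto simp: tau_def)
    then show ?thesis
      using True j by (simp add: shift_tuple_def h_def)
  next
    case False
    then have wrap: "j + ?n = j - (k - ?n) + k" and lt: "j - (k - ?n) < ?n"
      using j n(1) by linarith+
    have "tau j = (j - (k - ?n) + k) mod k"
      by (simp only: tau_def if_P[OF j] wrap)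
    also have "\<dots> = j - (k - ?n)"
      using lt n(1) by simp
    finally have "tau j = j - (k - ?n)" .
    with lt show ?thesis
      using False j n by (simp add: shift_tuple_def h_def)
  qed
  ultimately show ?thesis
    by (rule stab_card_conj)
qed

lemma shift_tuple_eq_1_iff:
  assumes i: "i \<in> nondec_tuples k m" and j: "j < k"
  shows "shift_tuple k m i j = 1 \<longleftrightarrow> j < k - num_below k m i"
proof -
  have "j - (k - num_below k m i) < k"
    using j by linarith
  then have "i (j - (k - num_below k m i)) \<noteq> 0"
    using nondec_tuples_range(1)[OF i] by fastforce
  then show ?thesis
    using j by (simp add: shift_tuple_def)
qed

lemma card_shift_tuple_eq_1:
  assumes "i \<in> nondec_tuples k m"
  shows "card {j. j < k \<and> shift_tuple k m i j = 1} = k - num_below k m i"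
proof -
  have "{j. j < k \<and> shift_tuple k m i j = 1} = {..<k - num_below k m i}"
    using shift_tuple_eq_1_iff[OF assms] by auto
  then show ?thesis
    by simp
qed

lemma shift_tuple_add:
  assumes i: "i \<in> nondec_tuples k m" and j: "j < num_below k m i"
  shows "shift_tuple k m i (j + (k - num_below k m i)) = Suc (i j)"
proof -
  have "j + (k - num_below k m i) < k" "\<not> j + (k - num_below k m i) < k - num_below k m i"
    using j num_below_le[OF i] by linarith+
  then show ?thesis
    by (simp add: shift_tuple_def)
qed

lemma inj_on_cyclic_shift:
  assumes k: "k > 0"
  shows "inj_on (cyclic_shift k m) ({..<k} \<times> nondec_tuples k m)"
proof (rule inj_onI, clarify)
  fix c i c' i'
  assume c: "c < k" "c' < k" and i: "i \<in> nondec_tuples k m" "i' \<in> nondec_tuples k m"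
    and eq: "cyclic_shift k m (c, i) = cyclic_shift k m (c', i')"
  let ?n = "num_below k m i"
  have eq_mod: "(c + ?n) mod k = (c' + num_below k m i') mod k"
    and eq_shift: "shift_tuple k m i = shift_tuple k m i'"
    using eq by (simp_all add: cyclic_shift_def)
  have "k - ?n = k - num_below k m i'"
    using card_shift_tuple_eq_1[OF i(1)] card_shift_tuple_eq_1[OF i(2)] eq_shift by simp
  then have n: "num_below k m i' = ?n"
    using num_below_le[OF i(1)] num_below_le[OF i(2)] by simp
  have "i j = i' j" if j: "j < k" for j
  proof (cases "j < ?n")
    case True
    then show ?thesis
      using shift_tuple_add[OF i(1) True] shift_tuple_add[OF i(2), of j] eq_shift n by simp
  next
    case False
    then show ?thesis
      using less_num_below_iff[OF i(1) j] less_num_below_iff[OF i(2) j] n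
        nondec_tuples_range(2)[OF i(1) j] nondec_tuples_range(2)[OF i(2) j] by simp
  qed
  then have "i = i'"
    by (rule nondec_tuples_eqI[OF i])
  moreover have "c = c'"
    by (rule inj_onD[OF bij_betw_imp_inj_on[OF bij_betw_add_mod[OF k, of ?n]]])
      (use eq_mod n c in auto)
  ultimately show "c = c' \<and> i = i'"
    by simp
qed

lemma bij_betw_cyclic_shift:
  assumes k: "k > 0"
  shows "bij_betw (cyclic_shift k m) ({..<k} \<times> nondec_tuples k m) ({..<k} \<times> nondec_tuples k m)"
proof -
  have "cyclic_shift k m ` ({..<k} \<times> nondec_tuples k m) \<subseteq> {..<k} \<times> nondec_tuples k m"
    using k shift_tuple_in_nondec_tuples by (auto simp: cyclic_shift_def)
  then show ?thesis
    using inj_on_cyclic_shift[OF k] finite_nondec_tuples by (simp add: bij_betw_def endo_inj_surj)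
qed

lemma rot_add_diff:
  assumes "p < n" "n \<le> k"
  shows "rot k n u (p + (k - n)) = u p"
proof -
  have "p + (k - n) + n = p + k"
    using assms by simp
  then show ?thesis
    using assms by (simp add: rot_def)
qed

lemma shift_tuple_atMost_eq:
  assumes i: "i \<in> nondec_tuples k m" and l: "1 \<le> l" "l < m"
  defines "n \<equiv> num_below k m i"
  shows "{p. p < k \<and> shift_tuple k m i p \<le> l}
       = {..<k - n} \<union> (\<lambda>p. p + (k - n)) ` {p. p < k \<and> i p \<le> l - 1}"
    (is "?L = {..<k - n} \<union> _ ` ?S")
proof (intro set_eqI iffI)
  fix p assume p: "p \<in> ?L"
  show "p \<in> {..<k - n} \<union> (\<lambda>p. p + (k - n)) ` ?S"
  proof (cases "p < k - n")
    case False
    then have "p - (k - n) \<in> ?S" "p = p - (k - n) + (k - n)"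
      using p by (auto simp: shift_tuple_def n_def)
    then show ?thesis
      by blast
  qed simp
next
  fix p assume "p \<in> {..<k - n} \<union> (\<lambda>p. p + (k - n)) ` ?S"
  then consider "p < k - n" | x where "x \<in> ?S" "p = x + (k - n)"
    by auto
  then show "p \<in> ?L"
  proof cases
    case 1
    then show ?thesis
      using l by (simp add: shift_tuple_def n_def)
  next
    case 2
    then have "x < n"
      using l less_num_below_iff[OF i, of x] by (auto simp: n_def)
    then have "p < k" "\<not> p < k - n" "p - (k - n) = x"
      using 2 num_below_le[OF i] by (auto simp: n_def)
    then show ?thesis
      using 2 l by (simp add: shift_tuple_def n_def)
  qed
qed

lemma partial_prod_shift_tuple:
  fixes u :: "nat \<Rightarrow> 'a::comm_monoid_mult"
  assumes i: "i \<in> nondec_tuples k m" and l: "1 \<le> l" "l < m"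
  defines "n \<equiv> num_below k m i"
  shows "partial_prod k (rot k n u) (shift_tuple k m i) l
       = (\<Prod>p<k - n. rot k n u p) * partial_prod k u i (l - 1)"
proof -
  let ?S = "{p. p < k \<and> i p \<le> l - 1}"
  have "partial_prod k (rot k n u) (shift_tuple k m i) l
      = (\<Prod>p\<in>{..<k - n} \<union> (\<lambda>p. p + (k - n)) ` ?S. rot k n u p)"
    unfolding partial_prod_def shift_tuple_atMost_eq[OF i l] n_def ..
  also have "\<dots> = (\<Prod>p<k - n. rot k n u p) * (\<Prod>p\<in>?S. rot k n u (p + (k - n)))"
    by (subst prod.union_disjoint) (auto simp: prod.reindex)
  also have "(\<Prod>p\<in>?S. rot k n u (p + (k - n))) = (\<Prod>p\<in>?S. u p)"
  proof (rule prod.cong[OF refl])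
    fix p assume "p \<in> ?S"
    then have "p < n"
      using l less_num_below_iff[OF i, of p] by (auto simp: n_def)
    then show "rot k n u (p + (k - n)) = u p"
      using num_below_le[OF i] by (intro rot_add_diff) (auto simp: n_def)
  qed
  finally show ?thesis
    unfolding partial_prod_def .
qed

lemma prod_rot_mult_partial_prod_last:
  fixes u :: "nat \<Rightarrow> 'a::comm_monoid_mult"
  assumes i: "i \<in> nondec_tuples k m" and m: "m > 0"
  defines "n \<equiv> num_below k m i"
  shows "(\<Prod>p<k - n. rot k n u p) * partial_prod k u i (m - 1) = (\<Prod>p<k. u p)"
proof -
  have n_le: "n \<le> k" and below: "\<And>j. j < k \<Longrightarrow> i j < m \<longleftrightarrow> j < n"
    using num_below_le[OF i] less_num_below_iff[OF i] unfolding n_def by auto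
  have "p < k \<and> i p \<le> m - 1 \<longleftrightarrow> p < n" for p
    using below[of p] n_le m by (cases "p < k") auto
  then have "{p. p < k \<and> i p \<le> m - 1} = {..<n}"
    by auto
  then have "partial_prod k u i (m - 1) = (\<Prod>p<n. u p)"
    unfolding partial_prod_def by simp
  moreover have "(\<Prod>p<k - n. rot k n u p) = (\<Prod>p\<in>{n..<k}. u p)"
  proof -
    have "rot k n u p = u (n + p)" if "p < k - n" for p
      using that by (simp add: rot_def add.commute)
    then show ?thesis
      by (simp add: prod.atLeastLessThan_shift_0[of u n k] lessThan_atLeast0)
  qed
  moreover have "(\<Prod>p<n. u p) * (\<Prod>p\<in>{n..<k}. u p) = (\<Prod>p<k. u p)"
    using prod.atLeastLessThan_concat[of 0 n k u] n_le by (simp add: lessThan_atLeast0)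
  ultimately show ?thesis
    by (simp add: mult.commute)
qed

lemma node_shift_tuple:
  fixes q :: "'a::comm_monoid_mult"
  assumes i: "i \<in> nondec_tuples k m" and m: "m > 0" and l: "l < m"
    and u: "q ^ m * (\<Prod>p<k. u p) = 1"
  defines "n \<equiv> num_below k m i"
  shows "node q k (rot k n u) (shift_tuple k m i) l
       = q * (\<Prod>p<k - n. rot k n u p) * node q k u i ((l + (m - 1)) mod m)"
proof (cases "l = 0")
  case True
  have "q * (\<Prod>p<k - n. rot k n u p) * node q k u i (m - 1)
      = (q * q ^ (m - 1)) * ((\<Prod>p<k - n. rot k n u p) * partial_prod k u i (m - 1))"
    by (simp add: node_def mult_ac)
  also have "\<dots> = q ^ m * ((\<Prod>p<k - n. rot k n u p) * partial_prod k u i (m - 1))"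
    using m by (simp flip: power_Suc)
  also have "\<dots> = 1"
    using prod_rot_mult_partial_prod_last[OF i m, where u = u] u unfolding n_def by simp
  finally show ?thesis
    using True m node_0[OF shift_tuple_in_nondec_tuples[OF i]] by simp
next
  case False
  have "(l + (m - 1)) mod m = l - 1"
    using False l by (simp add: mod_if)
  moreover have "q ^ l = q * q ^ (l - 1)"
    using False by (simp flip: power_Suc)
  moreover have "partial_prod k (rot k n u) (shift_tuple k m i) l
      = (\<Prod>p<k - n. rot k n u p) * partial_prod k u i (l - 1)"
    using partial_prod_shift_tuple[OF i _ l] False unfolding n_def by simp
  ultimately show ?thesis
    unfolding node_def by (simp add: mult_ac)
qed

section \<open>Independence of the node\<close>

locale cyclic_nodes =
  fixes q :: complex and t :: "nat \<Rightarrow> complex" and k m :: nat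
  assumes k_pos: "k > 0" and m_pos: "m > 0"
    and normalized: "q ^ m * (\<Prod>j<k. t j) = 1"
    and denom_nonzero: "\<forall>c<k. \<forall>i\<in>nondec_tuples k m. denom q (rot k c t) k m i \<noteq> 0"
begin

abbreviation index_pairs :: "(nat \<times> (nat \<Rightarrow> nat)) set" where
  "index_pairs \<equiv> {..<k} \<times> nondec_tuples k m"

definition nodes :: "nat \<times> (nat \<Rightarrow> nat) \<Rightarrow> nat \<Rightarrow> complex" where
  "nodes x = node q k (rot k (fst x) t) (snd x)"

lemma normalized_rot: "q ^ m * (\<Prod>j<k. rot k c t j) = 1"
  using normalized by (simp add: prod_rot)

lemma q_nonzero: "q \<noteq> 0"
  using normalized m_pos by (metis mult_zero_left power_0_left zero_neq_one not_gr0)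

lemma t_nonzero: "j < k \<Longrightarrow> t j \<noteq> 0"
  using normalized by (metis lessThan_iff mult_zero_right prod_zero_iff finite_lessThan zero_neq_one)

lemma nodes_0: "x \<in> index_pairs \<Longrightarrow> nodes x 0 = 1"
  by (auto simp: nodes_def node_0)

lemma nodes_ne_1:
  assumes x: "x \<in> index_pairs" and b: "0 < b" "b < m"
  shows "nodes x b \<noteq> 1"
proof
  assume "nodes x b = 1"
  obtain c i where ci: "x = (c, i)" "c < k" "i \<in> nondec_tuples k m"
    using x by auto
  have "denom q (rot k c t) k m i = (\<Prod>l\<in>{1..<m}. 1 - nodes x l)"
    using denom_eq_prod_node[OF ci(3) k_pos] ci(1) by (simp add: nodes_def)
  also have "\<dots> = 0"
    using \<open>nodes x b = 1\<close> b by (intro prod_zero) auto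
  finally show False
    using denom_nonzero ci by auto
qed

lemma nodes_cyclic_shift:
  assumes x: "x \<in> index_pairs"
  obtains \<kappa> where "\<kappa> \<noteq> 0"
    "\<And>l. l < m \<Longrightarrow> nodes (cyclic_shift k m x) l = \<kappa> * nodes x ((l + (m - 1)) mod m)"
proof -
  obtain c i where ci: "x = (c, i)" "c < k" "i \<in> nondec_tuples k m"
    using x by auto
  define u where "u = rot k (num_below k m i) (rot k c t)"
  have "nodes (cyclic_shift k m x) l = node q k u (shift_tuple k m i) l" for l
    by (simp add: ci(1) nodes_def cyclic_shift_def u_def rot_rot)
  moreover have "(\<Prod>p<k - num_below k m i. u p) \<noteq> 0"
    using t_nonzero k_pos by (simp add: u_def rot_def)
  ultimately show ?thesis
    using that[of "q * (\<Prod>p<k - num_below k m i. u p)"] q_nonzero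
      node_shift_tuple[OF ci(3) m_pos _ normalized_rot] ci(1)
    by (simp add: nodes_def u_def)
qed

lemma inj_on_nodes:
  assumes x: "x \<in> index_pairs"
  shows "inj_on (nodes x) {..<m}"
proof -
  have pred_inj: "inj_on (\<lambda>l. (l + (m - 1)) mod m) {..<m}"
    using bij_betw_add_mod[OF m_pos] by (rule bij_betw_imp_inj_on)
  have "\<forall>x\<in>index_pairs. \<forall>b<m. nodes x b = nodes x a \<longrightarrow> b = a" if "a < m" for a
    using that
  proof (induction a)
    case 0
    then show ?case
      using nodes_0 nodes_ne_1 by (metis neq0_conv)
  next
    case (Suc a)
    show ?case
    proof (intro ballI allI impI)
      fix x b assume x: "x \<in> index_pairs" and b: "b < m" and eq: "nodes x b = nodes x (Suc a)"
      have "x \<in> cyclic_shift k m ` index_pairs"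
        using x bij_betw_cyclic_shift[OF k_pos, of m] by (simp add: bij_betw_def)
      then obtain z where z: "z \<in> index_pairs" "x = cyclic_shift k m z"
        by blast
      obtain \<kappa> where "\<kappa> \<noteq> 0"
        and shift: "\<And>l. l < m \<Longrightarrow> nodes x l = \<kappa> * nodes z ((l + (m - 1)) mod m)"
        using nodes_cyclic_shift[OF z(1)] z(2) by metis
      have "(Suc a + (m - 1)) mod m = a"
        using Suc.prems by (simp add: mod_if)
      then have "nodes z ((b + (m - 1)) mod m) = nodes z a"
        using eq shift[OF b] shift[OF Suc.prems] \<open>\<kappa> \<noteq> 0\<close> by simp
      moreover have "\<forall>b<m. nodes z b = nodes z a \<longrightarrow> b = a"
        using Suc.IH[OF Suc_lessD[OF Suc.prems]] z(1) by blast
      ultimately have "(b + (m - 1)) mod m = (Suc a + (m - 1)) mod m"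
        using m_pos \<open>(Suc a + (m - 1)) mod m = a\<close> by simp
      then show "b = Suc a"
        using inj_onD[OF pred_inj] b Suc.prems by blast
    qed
  qed
  then show ?thesis
    using x by (intro inj_onI) blast
qed

lemma lagrange_weight_cyclic_shift:
  assumes "x \<in> index_pairs" "a < m"
  shows "lagrange_weight (nodes (cyclic_shift k m x)) {..<m} a
       = lagrange_weight (nodes x) {..<m} ((a + (m - 1)) mod m)"
proof -
  obtain \<kappa> where "\<kappa> \<noteq> 0"
    and "\<And>l. l < m \<Longrightarrow> nodes (cyclic_shift k m x) l = \<kappa> * nodes x ((l + (m - 1)) mod m)"
    using nodes_cyclic_shift[OF assms(1)] by metis
  then show ?thesis
    using assms(2) by (intro lagrange_weight_transfer[OF bij_betw_add_mod[OF m_pos]]) auto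
qed

definition weight_sum :: "nat \<Rightarrow> complex" where
  "weight_sum a = (\<Sum>x\<in>index_pairs. lagrange_weight (nodes x) {..<m} a / of_nat (stab_card k (snd x)))"

lemma weight_sum_Suc:
  assumes "Suc a < m"
  shows "weight_sum (Suc a) = weight_sum a"
proof -
  have "weight_sum (Suc a) = (\<Sum>x\<in>index_pairs. lagrange_weight (nodes (cyclic_shift k m x)) {..<m} (Suc a)
      / of_nat (stab_card k (snd (cyclic_shift k m x))))"
    unfolding weight_sum_def by (rule sum.reindex_bij_betw[OF bij_betw_cyclic_shift[OF k_pos], symmetric])
  also have "\<dots> = weight_sum a"
    unfolding weight_sum_def
  proof (rule sum.cong[OF refl])
    fix x assume x: "x \<in> index_pairs"
    have "(Suc a + (m - 1)) mod m = a"
      using assms by (simp add: mod_if)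
    then show "lagrange_weight (nodes (cyclic_shift k m x)) {..<m} (Suc a)
        / of_nat (stab_card k (snd (cyclic_shift k m x)))
        = lagrange_weight (nodes x) {..<m} a / of_nat (stab_card k (snd x))"
      using x assms lagrange_weight_cyclic_shift[OF x, of "Suc a"]
      by (auto simp: cyclic_shift_def stab_card_shift_tuple k_pos)
  qed
  finally show ?thesis .
qed

lemma weight_sum_eq_weight_sum_0: "a < m \<Longrightarrow> weight_sum a = weight_sum 0"
  by (induction a) (simp_all add: weight_sum_Suc)

lemma sum_weight_sum: "(\<Sum>a<m. weight_sum a) = of_nat k * (of_nat m ^ k / fact k)"
proof -
  have "(\<Sum>a<m. weight_sum a)
      = (\<Sum>x\<in>index_pairs. (\<Sum>a<m. lagrange_weight (nodes x) {..<m} a) / of_nat (stab_card k (snd x)))"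
    unfolding weight_sum_def by (subst sum.swap) (simp add: sum_divide_distrib)
  also have "\<dots> = (\<Sum>x\<in>index_pairs. 1 / of_nat (stab_card k (snd x)))"
  proof (rule sum.cong[OF refl])
    fix x assume "x \<in> index_pairs"
    then have "(\<Sum>a<m. lagrange_weight (nodes x) {..<m} a) = 1"
      using sum_lagrange_weight[OF _ inj_on_nodes] m_pos by auto
    then show "(\<Sum>a<m. lagrange_weight (nodes x) {..<m} a) / of_nat (stab_card k (snd x))
        = 1 / of_nat (stab_card k (snd x))"
      by simp
  qed
  also have "\<dots> = (\<Sum>c<k. \<Sum>i\<in>nondec_tuples k m. 1 / of_nat (stab_card k i))"
    by (subst sum.cartesian_product) (simp add: split_def)
  finally show ?thesis
    by (simp add: sum_inverse_stab_card)
qed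

lemma weight_sum_0: "weight_sum 0 = of_nat m ^ (k - 1) / fact (k - 1)"
proof -
  have "of_nat m * weight_sum 0 = (\<Sum>a<m. weight_sum 0)"
    by simp
  also have "\<dots> = (\<Sum>a<m. weight_sum a)"
    by (rule sum.cong[OF refl]) (rule weight_sum_eq_weight_sum_0[symmetric], simp)
  also have "\<dots> = of_nat k * (of_nat m ^ k / fact k)"
    by (rule sum_weight_sum)
  also have "\<dots> = of_nat m * (of_nat m ^ (k - 1) / fact (k - 1))"
  proof -
    have "fact k = of_nat k * (fact (k - 1) :: complex)"
      using k_pos by (simp add: fact_reduce)
    moreover have "(of_nat m :: complex) ^ k = of_nat m * of_nat m ^ (k - 1)"
      using k_pos by (cases k) auto
    ultimately show ?thesis
      using k_pos by (simp add: field_simps)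
  qed
  finally show ?thesis
    using m_pos by (metis mult_left_cancel of_nat_eq_0_iff not_gr0)
qed

end

theorem corollary9p3:
  fixes q r :: complex and t s :: "nat \<Rightarrow> complex" and m k :: nat
  assumes "m > 0" and "k > 0"
    and "q ^ m * (\<Prod>j<k. t j) = 1"
    and "r ^ 2 = q"
    and "\<forall>j<k. s j ^ 2 = t j"
    and "(\<Prod>j<k. s j) = inverse (r ^ m)"
    and "\<forall>c<k. \<forall>i\<in>nondec_tuples k m. denom q (rot k c t) k m i \<noteq> 0"
  shows "(\<Sum>c<k. tilde_sum q (rot k c t) (rot k c s) k m)
           = (-1) ^ (m - 1) * r ^ (m ^ 2) * of_nat m ^ (k - 1) / fact (k - 1)"
proof -
  interpret cyclic_nodes q t k m
    using assms(1-3,7) by unfold_locales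
  \<comment> \<open>Only the product of the square roots s j enters.\<close>
  have "summand q (rot k c t) (rot k c s) k m i
      = (-1) ^ (m - 1) * r ^ (m ^ 2) * lagrange_weight (nodes (c, i)) {..<m} 0"
    if "i \<in> nondec_tuples k m" for c i
    using summand_eq_lagrange_weight[OF that assms(2,1) normalized_rot assms(4)] assms(6)
    by (simp add: prod_rot nodes_def)
  then have "(\<Sum>c<k. tilde_sum q (rot k c t) (rot k c s) k m) = (-1) ^ (m - 1) * r ^ (m ^ 2) * weight_sum 0"
    by (simp add: tilde_sum_def weight_sum_def sum.cartesian_product sum_distrib_left split_def)
  then show ?thesis
    by (simp add: weight_sum_0)
qed

end
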